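(* Suppose that for every $s\in G$ and every $x_{P(s)}\in\mathcal{X}_{P(s)}$ there is a (possibly infinite) set $\Gamma(s,x_{P(s)})$ of real-valued functions on $\mathcal{X}_s$ such that the local credal set $\mathcal{M}_{s\mid x_{P(s)}}$ is exactly the set of real-valued functions $p$ on $\mathcal{X}_s$ satisfying $$\sum_{z_s\in\mathcal{X}_s}p(z_s)=1\quad\text{and}\quad \sum_{z_s\in\mathcal{X}_s}p(z_s)\gamma(z_s)\geq 0\ \text{ for all }\gamma\in\Gamma(s,x_{P(s)}).$$ Then $\mathcal{F}^{\mathrm{irr}}_G(X_G)$ consists exactly of those probability mass functions $P(X_G)$ on $\mathcal{X}_G$ such that for all $s\in G$, all $x_{N(s)}\in\mathcal{X}_{N(s)}$ and all $\gamma\in\Gamma(s,x_{P(s)})$ (where $x_{P(s)}$ is the restriction of $x_{N(s)}$ to $P(s)$): $$\sum_{z_s\in\mathcal{X}_s}\ \sum_{z_{D(s)}\in\mathcal{X}_{D(s)}}P(z_s,z_{D(s)},x_{N(s)})\,\gamma(z_s)\geq 0.$$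
   Context: Setting: $G$ is a finite set of nodes forming a directed acyclic graph (DAG). Each node $s\in G$ carries a variable $X_s$ taking values in a finite nonempty set $\mathcal{X}_s$; for $S\subseteq G$, $X_S=(X_s)_{s\in S}$ takes values $x_S$ in $\mathcal{X}_S=\times_{s\in S}\mathcal{X}_s$ ($\mathcal{X}_\emptyset$ is a singleton). Graph notions: $P(s)$ is the set of parents of $s$; $s\sqsubseteq v$ means there is a directed path (possibly of length 0) from $s$ to $v$, and $s\sqsubset v$ means $s\sqsubseteq v$ and $s\neq v$; $D(s)=\{v\in G: s\sqsubset v\}$ (descendants); $N(s)=G\setminus(\{s\}\cup D(s))$ (non-descendants); $N'(s)=N(s)\setminus P(s)$ (non-parent non-descendants). Local models: for every $s\in G$ and $x_{P(s)}\in\mathcal{X}_{P(s)}$, $\mathcal{M}_{s\mid x_{P(s)}}$ is a nonempty closed convex set of probability mass functions on $\mathcal{X}_s$. A full conditional probability measure on a finite set $\Omega$ is a map $P:\mathcal{P}(\Omega)\times(\mathcal{P}(\Omega)\setminus\{\emptyset\})\to\mathbb{R}$, $(A,B)\mapsto P(A\mid B)$, such that for all $A,C\subseteq\Omega$ and nonempty $B\subseteq \Omega$: (F1) $P(\cdot\mid B)$ is a probability measure on $\mathcal{P}(\Omega)$ with $P(B\mid B)=1$; (F2) $P(A\cap C\mid B)=P(A\mid C\cap B)P(C\mid B)$ whenever $C\cap B\neq\emptyset$. For $S\subseteq G$ and $x_S\in\mathcal{X}_S$, the event $x_S$ denotes $\{z_G\in\mathcal{X}_G: z_S=x_S\}$;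 $P(A)=P(A\mid\mathcal{X}_G)$. The irrelevant natural extension $\mathcal{F}^{\mathrm{irr}}_G$ is the set of all full conditional probability measures $P$ on $\mathcal{X}_G$ such that for all $s\in G$ and all $x_{N(s)}\in\mathcal{X}_{N(s)}$, the mass function $P(X_s\mid x_{N(s)})$ (i.e. $z_s\mapsto P(z_s\mid x_{N(s)})$) belongs to $\mathcal{M}_{s\mid x_{P(s)}}$, where $x_{P(s)}$ is the restriction of $x_{N(s)}$ to $P(s)$. $\mathcal{F}^{\mathrm{irr}}_G(X_G)$ denotes the set of global mass functions $x_G\mapsto P(x_G)$ for $P\in\mathcal{F}^{\mathrm{irr}}_G$. *)

theory Defs
  imports "HOL-Analysis.Analysis"
begin

definition edges :: "'n set \<Rightarrow> ('n \<Rightarrow> 'n set) \<Rightarrow> ('n \<times> 'n) set" where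
  "edges G par = {(p, v). v \<in> G \<and> p \<in> par v}"

definition is_dag :: "'n set \<Rightarrow> ('n \<Rightarrow> 'n set) \<Rightarrow> bool" where
  "is_dag G par \<longleftrightarrow> finite G \<and> (\<forall>s\<in>G. par s \<subseteq> G) \<and> acyclic (edges G par)"

definition desc :: "'n set \<Rightarrow> ('n \<Rightarrow> 'n set) \<Rightarrow> 'n \<Rightarrow> 'n set" where
  "desc G par s = {v \<in> G. (s, v) \<in> (edges G par)\<^sup>+}"

definition nondesc :: "'n set \<Rightarrow> ('n \<Rightarrow> 'n set) \<Rightarrow> 'n \<Rightarrow> 'n set" where
  "nondesc G par s = G - ({s} \<union> desc G par s)"

text \<open>An element x_S of X_S is an extensional function in PiE S X
  (undefined outside S). The global space is PiE G X.\<close>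

definition event :: "('n \<Rightarrow> 'v) set \<Rightarrow> 'n set \<Rightarrow> ('n \<Rightarrow> 'v) \<Rightarrow> ('n \<Rightarrow> 'v) set" where
  "event \<Omega> S x = {z \<in> \<Omega>. \<forall>t\<in>S. z t = x t}"

definition full_cond_prob :: "'a set \<Rightarrow> ('a set \<Rightarrow> 'a set \<Rightarrow> real) \<Rightarrow> bool" where
  "full_cond_prob \<Omega> P \<longleftrightarrow>
     (\<forall>B. B \<subseteq> \<Omega> \<and> B \<noteq> {} \<longrightarrow>
        (\<forall>A. A \<subseteq> \<Omega> \<longrightarrow> P A B \<ge> 0) \<and>
        P \<Omega> B = 1 \<and>
        (\<forall>A C. A \<subseteq> \<Omega> \<and> C \<subseteq> \<Omega> \<and> A \<inter> C = {} \<longrightarrow> P (A \<union> C) B = P A B + P C B) \<and>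
        P B B = 1) \<and>
     (\<forall>A B C. A \<subseteq> \<Omega> \<and> B \<subseteq> \<Omega> \<and> C \<subseteq> \<Omega> \<and> B \<noteq> {} \<and> C \<inter> B \<noteq> {} \<longrightarrow>
        P (A \<inter> C) B = P A (C \<inter> B) * P C B)"

definition is_pmf_on :: "'a set \<Rightarrow> ('a \<Rightarrow> real) \<Rightarrow> bool" where
  "is_pmf_on S p \<longleftrightarrow> p \<in> extensional S \<and> (\<forall>z\<in>S. p z \<ge> 0) \<and> sum p S = 1"

definition local_model_ok :: "'v set \<Rightarrow> ('v \<Rightarrow> real) set \<Rightarrow> bool" where
  "local_model_ok S M \<longleftrightarrow> M \<noteq> {} \<and> (\<forall>p\<in>M. is_pmf_on S p) \<and> closed M \<and>
     (\<forall>p\<in>M. \<forall>q\<in>M. \<forall>t::real. 0 \<le> t \<and> t \<le> 1 \<longrightarrow>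
        (\<lambda>z\<in>S. t * p z + (1 - t) * q z) \<in> M)"

definition F_irr ::
  "'n set \<Rightarrow> ('n \<Rightarrow> 'n set) \<Rightarrow> ('n \<Rightarrow> 'v set) \<Rightarrow> ('n \<Rightarrow> ('n \<Rightarrow> 'v) \<Rightarrow> ('v \<Rightarrow> real) set)
    \<Rightarrow> (('n \<Rightarrow> 'v) set \<Rightarrow> ('n \<Rightarrow> 'v) set \<Rightarrow> real) set" where
  "F_irr G par X M =
     {P. full_cond_prob (PiE G X) P \<and>
         (\<forall>s\<in>G. \<forall>x \<in> PiE (nondesc G par s) X.
            (\<lambda>z\<in>X s. P (event (PiE G X) {s} (\<lambda>_. z)) (event (PiE G X) (nondesc G par s) x))
              \<in> M s (restrict x (par s)))}"

definition F_irr_global ::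
  "'n set \<Rightarrow> ('n \<Rightarrow> 'n set) \<Rightarrow> ('n \<Rightarrow> 'v set) \<Rightarrow> ('n \<Rightarrow> ('n \<Rightarrow> 'v) \<Rightarrow> ('v \<Rightarrow> real) set)
    \<Rightarrow> (('n \<Rightarrow> 'v) \<Rightarrow> real) set" where
  "F_irr_global G par X M =
     (\<lambda>P. \<lambda>x\<in>PiE G X. P {x} (PiE G X)) ` F_irr G par X M"

definition combine :: "'n set \<Rightarrow> ('n \<Rightarrow> 'n set) \<Rightarrow> 'n \<Rightarrow> 'v \<Rightarrow> ('n \<Rightarrow> 'v) \<Rightarrow> ('n \<Rightarrow> 'v) \<Rightarrow> ('n \<Rightarrow> 'v)" where
  "combine G par s z zD x = (\<lambda>t. if t = s then z else if t \<in> desc G par s then zD t else x t)"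

end

theory Submission
  imports Defs
begin

(* Forward inclusion: by the chain rule, the joint mass of the assignments extending x_N(s) with
   X_s = z equals P(z | x_N(s)) P(x_N(s)), so the inequalities of the local model survive
   multiplication by P(x_N(s)) >= 0.
   Converse: a mass function p satisfying the inequalities is extended to a full conditional
   measure by a lexicographic system of layers, namely p followed, for every S \<subseteq> G in order of
   increasing |S|, by the network mass in which the nodes of S carry the uniform kernel and all other
   nodes a fixed member of their local model. Conditioning on x_N(s) uses the first layer that charges
   it. If this is p, the inequalities are the hypothesis; if it is the layer of some S with s \<notin> S,
   the conditional is the chosen local model; and s \<in> S cannot occur, because the layer of S - {s}
   gives the event the same mass and comes earlier. *)

lemma sum_PiE_insert:
  assumes "x \<notin> S"
  shows "(\<Sum>f\<in>PiE (insert x S) T. F f) = (\<Sum>g\<in>PiE S T. \<Sum>y\<in>T x. F (g(x:=y)))"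
proof -
  have "(\<Sum>f\<in>PiE (insert x S) T. F f) = (\<Sum>(y,g)\<in>T x \<times> PiE S T. F (g(x:=y)))"
    unfolding PiE_insert_eq
    by (subst sum.reindex[OF inj_combinator[OF assms]]) (simp add: case_prod_unfold)
  also have "\<dots> = (\<Sum>y\<in>T x. \<Sum>g\<in>PiE S T. F (g(x:=y)))"
    by (simp add: sum.cartesian_product)
  also have "\<dots> = (\<Sum>g\<in>PiE S T. \<Sum>y\<in>T x. F (g(x:=y)))"
    by (rule sum.swap)
  finally show ?thesis .
qed

lemma sorted_card_nth_less:
  assumes "sorted (map card xs)" "i < length xs" "j < length xs" "card (xs ! i) < card (xs ! j)"
  shows "i < j"
  using sorted_nth_mono[OF assms(1), of j i] assms by (metis length_map not_le nth_map)

lemma full_cond_prob_nonneg: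
  "full_cond_prob \<Omega> P \<Longrightarrow> A \<subseteq> \<Omega> \<Longrightarrow> B \<subseteq> \<Omega> \<Longrightarrow> B \<noteq> {} \<Longrightarrow> 0 \<le> P A B"
  unfolding full_cond_prob_def by simp

lemma full_cond_prob_space:
  "full_cond_prob \<Omega> P \<Longrightarrow> B \<subseteq> \<Omega> \<Longrightarrow> B \<noteq> {} \<Longrightarrow> P \<Omega> B = 1"
  unfolding full_cond_prob_def by simp

lemma full_cond_prob_mult:
  assumes "full_cond_prob \<Omega> P" "A \<subseteq> \<Omega>" "B \<subseteq> \<Omega>" "C \<subseteq> \<Omega>" "C \<inter> B \<noteq> {}"
  shows "P (A \<inter> C) B = P A (C \<inter> B) * P C B"
proof -
  have "\<forall>A B C. A \<subseteq> \<Omega> \<and> B \<subseteq> \<Omega> \<and> C \<subseteq> \<Omega> \<and> B \<noteq> {} \<and> C \<inter> B \<noteq> {} \<longrightarrow>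
      P (A \<inter> C) B = P A (C \<inter> B) * P C B"
    using assms(1) unfolding full_cond_prob_def by (rule conjunct2)
  moreover have "B \<noteq> {}" using assms(5) by blast
  ultimately show ?thesis using assms(2-5) by blast
qed

lemma full_cond_prob_sum_singletons:
  assumes fc: "full_cond_prob \<Omega> P" and "finite \<Omega>" "\<Omega> \<noteq> {}" "A \<subseteq> \<Omega>"
  shows "P A \<Omega> = (\<Sum>\<omega>\<in>A. P {\<omega>} \<Omega>)"
proof -
  have add: "P (A \<union> C) \<Omega> = P A \<Omega> + P C \<Omega>" if "A \<subseteq> \<Omega>" "C \<subseteq> \<Omega>" "A \<inter> C = {}" for A C
    using fc that \<open>\<Omega> \<noteq> {}\<close> unfolding full_cond_prob_def by simp
  have "finite A" using assms finite_subset by blast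
  then show ?thesis using \<open>A \<subseteq> \<Omega>\<close>
  proof (induction A rule: finite_induct)
    case empty
    show ?case using add[of "{}" "{}"] by simp
  next
    case (insert a F)
    then show ?case using add[of "{a}" F] by simp
  qed
qed

lemma full_cond_prob_point_mass_pmf:
  assumes "full_cond_prob \<Omega> P" "finite \<Omega>" "\<Omega> \<noteq> {}"
  shows "is_pmf_on \<Omega> (\<lambda>\<omega>\<in>\<Omega>. P {\<omega>} \<Omega>)"
proof -
  have "(\<Sum>\<omega>\<in>\<Omega>. P {\<omega>} \<Omega>) = 1"
    using full_cond_prob_sum_singletons[OF assms order_refl] full_cond_prob_space[OF assms(1) order_refl assms(3)]
    by simp
  then show ?thesis
    using full_cond_prob_nonneg[OF assms(1) _ order_refl assms(3)] unfolding is_pmf_on_def by simp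
qed

section \<open>Lexicographic full conditional probabilities\<close>

definition first_pos_layer :: "('a \<Rightarrow> real) list \<Rightarrow> 'a set \<Rightarrow> nat" where
  "first_pos_layer Ls B = (LEAST k. k < length Ls \<and> 0 < sum (Ls ! k) B)"

definition lex_cond :: "('a \<Rightarrow> real) list \<Rightarrow> 'a set \<Rightarrow> 'a set \<Rightarrow> real" where
  "lex_cond Ls A B = sum (Ls ! first_pos_layer Ls B) (A \<inter> B) / sum (Ls ! first_pos_layer Ls B) B"

locale lex_system =
  fixes \<Omega> :: "'a set" and Ls :: "('a \<Rightarrow> real) list"
  assumes finite_domain: "finite \<Omega>"
    and layer_nonneg: "\<And>k \<omega>. k < length Ls \<Longrightarrow> \<omega> \<in> \<Omega> \<Longrightarrow> 0 \<le> (Ls ! k) \<omega>"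
    and layers_cover: "\<And>\<omega>. \<omega> \<in> \<Omega> \<Longrightarrow> \<exists>k<length Ls. 0 < (Ls ! k) \<omega>"
begin

lemma layer_sum_nonneg: "k < length Ls \<Longrightarrow> A \<subseteq> \<Omega> \<Longrightarrow> 0 \<le> sum (Ls ! k) A"
  by (rule sum_nonneg) (use layer_nonneg in blast)

lemma layer_sum_mono: "k < length Ls \<Longrightarrow> A \<subseteq> B \<Longrightarrow> B \<subseteq> \<Omega> \<Longrightarrow> sum (Ls ! k) A \<le> sum (Ls ! k) B"
  by (rule sum_mono2) (use finite_domain layer_nonneg in \<open>auto intro: finite_subset\<close>)

lemma
  assumes "B \<subseteq> \<Omega>" "B \<noteq> {}"
  shows first_pos_layer_less: "first_pos_layer Ls B < length Ls"
    and first_pos_layer_pos: "0 < sum (Ls ! first_pos_layer Ls B) B"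
    and less_first_pos_layer: "i < first_pos_layer Ls B \<Longrightarrow> sum (Ls ! i) B = 0"
proof -
  obtain \<omega> where "\<omega> \<in> B" using assms by blast
  then obtain k where k: "k < length Ls" "0 < (Ls ! k) \<omega>" using layers_cover assms by blast
  have "sum (Ls ! k) {\<omega>} \<le> sum (Ls ! k) B"
    using layer_sum_mono[OF k(1), of "{\<omega>}" B] \<open>\<omega> \<in> B\<close> assms by simp
  then have "k < length Ls \<and> 0 < sum (Ls ! k) B" using k by simp
  from LeastI[of "\<lambda>k. k < length Ls \<and> 0 < sum (Ls ! k) B", OF this]
  show "first_pos_layer Ls B < length Ls" "0 < sum (Ls ! first_pos_layer Ls B) B"
    unfolding first_pos_layer_def by auto
  assume i: "i < first_pos_layer Ls B"
  then have "\<not> (i < length Ls \<and> 0 < sum (Ls ! i) B)"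
    unfolding first_pos_layer_def by (rule not_less_Least)
  then show "sum (Ls ! i) B = 0"
    using i \<open>first_pos_layer Ls B < length Ls\<close> layer_sum_nonneg[of i B] assms by force
qed

lemma first_pos_layer_eqI:
  assumes "B \<subseteq> \<Omega>" "B \<noteq> {}" "k < length Ls" "0 < sum (Ls ! k) B" "\<And>i. i < k \<Longrightarrow> sum (Ls ! i) B = 0"
  shows "first_pos_layer Ls B = k"
proof -
  have "first_pos_layer Ls B \<le> k" unfolding first_pos_layer_def by (rule Least_le) (use assms in simp)
  moreover have "\<not> first_pos_layer Ls B < k"
    using assms(5)[of "first_pos_layer Ls B"] first_pos_layer_pos[OF assms(1,2)] by auto
  ultimately show ?thesis by simp
qed

(* The layer responsible for B is also responsible for every C \<inter> B it charges: this gives (F2). *)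
lemma full_cond_prob_lex_cond: "full_cond_prob \<Omega> (lex_cond Ls)"
  unfolding full_cond_prob_def
proof (intro conjI allI impI)
  fix B assume B: "B \<subseteq> \<Omega> \<and> B \<noteq> {}"
  let ?L = "Ls ! first_pos_layer Ls B"
  have pos: "0 < sum ?L B" and k: "first_pos_layer Ls B < length Ls"
    using B first_pos_layer_pos first_pos_layer_less by auto
  show "0 \<le> lex_cond Ls A B" for A
  proof -
    have "0 \<le> sum ?L (A \<inter> B)" using layer_sum_nonneg[OF k, of "A \<inter> B"] B by blast
    with pos show ?thesis unfolding lex_cond_def by simp
  qed
  show "lex_cond Ls \<Omega> B = 1" using pos B unfolding lex_cond_def by (simp add: Int_absorb1)
  show "lex_cond Ls B B = 1" using pos unfolding lex_cond_def by simp
  show "lex_cond Ls (A \<union> C) B = lex_cond Ls A B + lex_cond Ls C B"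
    if "A \<subseteq> \<Omega> \<and> C \<subseteq> \<Omega> \<and> A \<inter> C = {}" for A C
  proof -
    have "sum ?L ((A \<union> C) \<inter> B) = sum ?L (A \<inter> B) + sum ?L (C \<inter> B)"
      using that B finite_domain
      by (subst sum.union_disjoint[symmetric]) (auto intro: finite_subset intro!: sum.cong)
    then show ?thesis unfolding lex_cond_def by (simp add: add_divide_distrib)
  qed
next
  fix A B C assume "A \<subseteq> \<Omega> \<and> B \<subseteq> \<Omega> \<and> C \<subseteq> \<Omega> \<and> B \<noteq> {} \<and> C \<inter> B \<noteq> {}"
  then have B: "B \<subseteq> \<Omega>" "B \<noteq> {}" and CB: "C \<inter> B \<subseteq> \<Omega>" "C \<inter> B \<noteq> {}" by auto
  define k where "k = first_pos_layer Ls B"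
  have k: "k < length Ls" using first_pos_layer_less[OF B] by (simp add: k_def)
  show "lex_cond Ls (A \<inter> C) B = lex_cond Ls A (C \<inter> B) * lex_cond Ls C B"
  proof (cases "0 < sum (Ls ! k) (C \<inter> B)")
    case True
    have "first_pos_layer Ls (C \<inter> B) = k"
    proof (rule first_pos_layer_eqI[OF CB k True])
      fix i assume "i < k"
      then have "sum (Ls ! i) B = 0" "i < length Ls" using less_first_pos_layer[OF B] k by (auto simp: k_def)
      then show "sum (Ls ! i) (C \<inter> B) = 0"
        using layer_sum_mono[of i "C \<inter> B" B] layer_sum_nonneg[of i "C \<inter> B"] B CB by simp
    qed
    then show ?thesis using True first_pos_layer_pos[OF B]
      unfolding lex_cond_def k_def[symmetric] by (simp add: Int_assoc Int_commute Int_left_commute)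
  next
    case False
    then have z: "sum (Ls ! k) (C \<inter> B) = 0" using layer_sum_nonneg[OF k, of "C \<inter> B"] CB by simp
    then have "sum (Ls ! k) (A \<inter> C \<inter> B) = 0"
      using layer_sum_mono[OF k, of "A \<inter> C \<inter> B" "C \<inter> B"] layer_sum_nonneg[OF k, of "A \<inter> C \<inter> B"] CB
      by force
    then show ?thesis using z unfolding lex_cond_def k_def[symmetric] by (simp add: Int_assoc Int_commute)
  qed
qed

end

section \<open>Products of Markov kernels on a DAG\<close>

locale dag_model =
  fixes G :: "'n set" and par :: "'n \<Rightarrow> 'n set" and X :: "'n \<Rightarrow> 'v set"
  assumes dag: "is_dag G par"
    and X_fin: "\<forall>s\<in>G. finite (X s) \<and> X s \<noteq> {}"
begin

abbreviation "\<Omega> \<equiv> PiE G X"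
abbreviation "node_event s z \<equiv> event \<Omega> {s} (\<lambda>_. z)"
abbreviation "nondesc_event s x \<equiv> event \<Omega> (nondesc G par s) x"

lemma finite_nodes: "finite G" and par_subset: "t \<in> G \<Longrightarrow> par t \<subseteq> G"
  and acyclic_edges: "acyclic (edges G par)"
  using dag by (auto simp: is_dag_def)

lemma finite_space: "finite \<Omega>"
  using finite_nodes X_fin by (intro finite_PiE) auto

lemma space_nonempty: "\<Omega> \<noteq> {}"
  using X_fin by (auto simp: PiE_eq_empty_iff)

lemma edgeI: "t \<in> G \<Longrightarrow> p \<in> par t \<Longrightarrow> (p, t) \<in> edges G par"
  by (auto simp: edges_def)

lemma desc_subset: "desc G par s \<subseteq> G"
  by (auto simp: desc_def)

lemma not_in_desc: "s \<notin> desc G par s"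
  using acyclic_edges by (auto simp: desc_def acyclic_def)

lemma desc_trans_edge: "t \<in> G \<Longrightarrow> p \<in> par t \<Longrightarrow> p \<in> insert s (desc G par s) \<Longrightarrow> t \<in> desc G par s"
  using edgeI[of t p] by (auto simp: desc_def intro: trancl_into_trancl)

lemma par_nondesc: "s \<in> G \<Longrightarrow> par s \<subseteq> nondesc G par s"
  using par_subset desc_trans_edge[of s _ s] not_in_desc[of s] by (auto simp: nondesc_def)

lemma par_nondesc_closed: "t \<in> nondesc G par s \<Longrightarrow> par t \<subseteq> nondesc G par s"
  using par_subset desc_trans_edge[of t _ s] by (auto simp: nondesc_def)

lemma restrict_par_PiE: "s \<in> G \<Longrightarrow> x \<in> PiE (nondesc G par s) X \<Longrightarrow> restrict x (par s) \<in> PiE (par s) X"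
  using par_nondesc by (auto simp: PiE_iff)

lemma obtain_sink:
  assumes "D \<subseteq> G" "D \<noteq> {}"
  obtains v where "v \<in> D" "\<And>t. t \<in> D \<Longrightarrow> v \<notin> par t"
proof -
  have "edges G par \<subseteq> G \<times> G" using par_subset by (auto simp: edges_def)
  then have "finite (edges G par)" using finite_nodes by (meson finite_SigmaI finite_subset)
  then have "wf ((edges G par)\<inverse>)" using acyclic_edges by (rule finite_acyclic_wf_converse)
  then obtain v where "v \<in> D" "\<And>y. (y, v) \<in> (edges G par)\<inverse> \<Longrightarrow> y \<notin> D"
    using wfE_min[of _ _ D] assms(2) by blast
  then show ?thesis using that assms(1) edgeI by blast
qed

lemma sum_kernel_prod_sink:
  fixes K :: "'n \<Rightarrow> ('n \<Rightarrow> 'v) \<Rightarrow> 'v \<Rightarrow> real"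
  assumes K_sum: "\<And>t xp. t \<in> G \<Longrightarrow> xp \<in> PiE (par t) X \<Longrightarrow> (\<Sum>a\<in>X t. K t xp a) = 1"
    and "v \<in> H" "H \<subseteq> G" "\<And>t. t \<in> H \<Longrightarrow> v \<notin> par t" "f \<in> Pi G X"
  shows "(\<Sum>a\<in>X v. \<Prod>t\<in>H. K t (restrict (f(v := a)) (par t)) ((f(v := a)) t))
    = (\<Prod>t\<in>H - {v}. K t (restrict f (par t)) (f t))"
proof -
  let ?C = "\<Prod>t\<in>H - {v}. K t (restrict f (par t)) (f t)"
  have "finite H" using assms(3) by (rule finite_subset[OF _ finite_nodes])
  have "v \<in> G" using assms(2,3) by blast
  have "restrict f (par v) \<in> PiE (par v) X"
    using assms(5) par_subset[OF \<open>v \<in> G\<close>] by (auto simp: Pi_def)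
  then have K_v_sum: "(\<Sum>a\<in>X v. K v (restrict f (par v)) a) = 1"
    using K_sum \<open>v \<in> G\<close> by blast
  have restrict_upd: "restrict (f(v := a)) (par t) = restrict f (par t)" if "t \<in> H" for t a
    using assms(4)[OF that] by (auto simp: restrict_def)
  have "(\<Sum>a\<in>X v. \<Prod>t\<in>H. K t (restrict (f(v := a)) (par t)) ((f(v := a)) t))
      = (\<Sum>a\<in>X v. K v (restrict f (par v)) a * ?C)"
    unfolding prod.remove[OF \<open>finite H\<close> \<open>v \<in> H\<close>]
    using restrict_upd assms(2) by (auto intro!: sum.cong prod.cong)
  also have "\<dots> = (\<Sum>a\<in>X v. K v (restrict f (par v)) a) * ?C"
    by (rule sum_distrib_right[symmetric])
  also have "\<dots> = ?C"
    by (simp add: K_v_sum)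
  finally show ?thesis .
qed

lemma sum_kernel_prod_child_closed:
  fixes K :: "'n \<Rightarrow> ('n \<Rightarrow> 'v) \<Rightarrow> 'v \<Rightarrow> real"
  assumes K_sum: "\<And>t xp. t \<in> G \<Longrightarrow> xp \<in> PiE (par t) X \<Longrightarrow> (\<Sum>a\<in>X t. K t xp a) = 1"
    and "D \<subseteq> H" "H \<subseteq> G" "\<And>t. t \<in> H \<Longrightarrow> par t \<inter> D \<noteq> {} \<Longrightarrow> t \<in> D" "\<omega> \<in> Pi G X"
  shows "(\<Sum>g\<in>PiE D X. \<Prod>t\<in>H. K t (restrict (override_on \<omega> g D) (par t)) (override_on \<omega> g D t))
    = (\<Prod>t\<in>H - D. K t (restrict \<omega> (par t)) (\<omega> t))"
proof -
  have "finite D" using assms(2,3) by (intro finite_subset[OF _ finite_nodes]) blast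
  then show ?thesis using assms(2-4)
  proof (induction D arbitrary: H rule: finite_remove_induct)
    case empty
    then show ?case by simp
  next
    case (remove D)
    obtain v where "v \<in> D" "\<And>t. t \<in> D \<Longrightarrow> v \<notin> par t"
      using obtain_sink[of D] remove.hyps(2) remove.prems by blast
    then have no_child: "v \<notin> par t" if "t \<in> H" for t
      using remove.prems(3)[OF that] by blast
    let ?D' = "D - {v}"
    have "v \<notin> ?D'" "insert v ?D' = D" using \<open>v \<in> D\<close> by auto
    have upd: "override_on \<omega> (g(v := a)) D = (override_on \<omega> g ?D')(v := a)" for g a
      using \<open>v \<in> D\<close> by (auto simp: override_on_def)
    have "(\<Sum>g\<in>PiE D X. \<Prod>t\<in>H. K t (restrict (override_on \<omega> g D) (par t)) (override_on \<omega> g D t))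
      = (\<Sum>g\<in>PiE ?D' X. \<Sum>a\<in>X v. \<Prod>t\<in>H. K t (restrict ((override_on \<omega> g ?D')(v := a)) (par t))
            (((override_on \<omega> g ?D')(v := a)) t))"
      using sum_PiE_insert[OF \<open>v \<notin> ?D'\<close>, where T = X and F = "\<lambda>g. \<Prod>t\<in>H.
          K t (restrict (override_on \<omega> g D) (par t)) (override_on \<omega> g D t)"]
      unfolding \<open>insert v ?D' = D\<close> upd .
    also have "\<dots> = (\<Sum>g\<in>PiE ?D' X. \<Prod>t\<in>H - {v}. K t (restrict (override_on \<omega> g ?D') (par t))
            (override_on \<omega> g ?D' t))"
    proof (rule sum.cong[OF refl], rule sum_kernel_prod_sink[OF K_sum])
      fix g assume "g \<in> PiE ?D' X"
      then show "override_on \<omega> g ?D' \<in> Pi G X"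
        using remove.prems(1,2) \<open>\<omega> \<in> Pi G X\<close> by (auto simp: override_on_def PiE_iff Pi_def)
    qed (use \<open>v \<in> D\<close> remove.prems no_child in auto)
    also have "\<dots> = (\<Prod>t\<in>H - {v} - ?D'. K t (restrict \<omega> (par t)) (\<omega> t))"
      using remove.prems by (intro remove.IH[OF \<open>v \<in> D\<close>]) auto
    also have "H - {v} - ?D' = H - D" using \<open>v \<in> D\<close> by auto
    finally show ?case .
  qed
qed

lemma combine_in_space:
  "s \<in> G \<Longrightarrow> x \<in> PiE (nondesc G par s) X \<Longrightarrow> z \<in> X s \<Longrightarrow> zD \<in> PiE (desc G par s) X \<Longrightarrow>
    combine G par s z zD x \<in> \<Omega>"
  by (auto simp: combine_def PiE_iff nondesc_def extensional_def desc_def)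

lemma combine_inj:
  assumes "zD \<in> PiE (desc G par s) X" "zD' \<in> PiE (desc G par s) X"
    and "combine G par s z zD x = combine G par s z' zD' x"
  shows "z = z'" "zD = zD'"
proof -
  show "z = z'" using fun_cong[OF assms(3), of s] by (simp add: combine_def)
  have "zD t = zD' t" for t
    using fun_cong[OF assms(3), of t] not_in_desc[of s] assms(1,2)
    by (cases "t \<in> desc G par s") (auto simp: combine_def PiE_iff extensional_def split: if_splits)
  then show "zD = zD'" by (rule ext)
qed

lemma nondesc_event_eq:
  assumes "s \<in> G" "x \<in> PiE (nondesc G par s) X"
  shows "nondesc_event s x = (\<lambda>(z, zD). combine G par s z zD x) ` (X s \<times> PiE (desc G par s) X)"
proof (intro set_eqI iffI)
  fix \<omega> assume \<omega>: "\<omega> \<in> nondesc_event s x"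
  have "\<omega> t = x t" if "t \<notin> insert s (desc G par s)" for t
  proof (cases "t \<in> G")
    case True
    then show ?thesis using \<omega> that by (simp add: event_def nondesc_def)
  next
    case False
    then show ?thesis using \<omega> assms(2) by (simp add: event_def nondesc_def PiE_def extensional_def)
  qed
  then have "combine G par s (\<omega> s) (restrict \<omega> (desc G par s)) x t = \<omega> t" for t
    by (simp add: combine_def)
  then have \<omega>_eq: "combine G par s (\<omega> s) (restrict \<omega> (desc G par s)) x = \<omega>" by (rule ext)
  have "(\<omega> s, restrict \<omega> (desc G par s)) \<in> X s \<times> PiE (desc G par s) X"
    using \<omega> assms(1) desc_subset by (auto simp: event_def PiE_iff)
  then show "\<omega> \<in> (\<lambda>(z, zD). combine G par s z zD x) ` (X s \<times> PiE (desc G par s) X)"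
    by (rule rev_image_eqI) (simp only: case_prod_conv \<omega>_eq)
next
  fix \<omega> assume "\<omega> \<in> (\<lambda>(z, zD). combine G par s z zD x) ` (X s \<times> PiE (desc G par s) X)"
  then obtain z zD where "z \<in> X s" "zD \<in> PiE (desc G par s) X" and \<omega>: "\<omega> = combine G par s z zD x"
    by auto
  then have "\<omega> \<in> \<Omega>" using combine_in_space[OF assms] by simp
  moreover have "\<omega> t = x t" if "t \<in> nondesc G par s" for t
    using that unfolding \<omega> by (simp add: combine_def nondesc_def)
  ultimately show "\<omega> \<in> nondesc_event s x" by (simp add: event_def)
qed

lemma sum_nondesc_event:
  assumes "s \<in> G" "x \<in> PiE (nondesc G par s) X"
  shows "(\<Sum>\<omega>\<in>nondesc_event s x. F \<omega>)
    = (\<Sum>z\<in>X s. \<Sum>zD\<in>PiE (desc G par s) X. F (combine G par s z zD x))"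
proof -
  have "inj_on (\<lambda>(z, zD). combine G par s z zD x) (X s \<times> PiE (desc G par s) X)"
    by (auto simp: inj_on_def dest: combine_inj)
  then show ?thesis unfolding nondesc_event_eq[OF assms]
    by (simp add: sum.reindex sum.cartesian_product case_prod_unfold)
qed

lemma sum_node_nondesc_event:
  assumes "s \<in> G" "x \<in> PiE (nondesc G par s) X" "z \<in> X s"
  shows "(\<Sum>\<omega>\<in>node_event s z \<inter> nondesc_event s x. F \<omega>)
    = (\<Sum>zD\<in>PiE (desc G par s) X. F (combine G par s z zD x))"
proof -
  have "node_event s z \<inter> nondesc_event s x = {\<omega> \<in> nondesc_event s x. \<omega> s = z}"
    by (auto simp: event_def)
  also have "\<dots> = (\<lambda>zD. combine G par s z zD x) ` PiE (desc G par s) X"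
    using assms(3) unfolding nondesc_event_eq[OF assms(1,2)] by (auto simp: combine_def)
  finally have "node_event s z \<inter> nondesc_event s x = (\<lambda>zD. combine G par s z zD x) ` PiE (desc G par s) X" .
  moreover have "inj_on (\<lambda>zD. combine G par s z zD x) (PiE (desc G par s) X)"
    by (auto simp: inj_on_def dest: combine_inj)
  ultimately show ?thesis by (simp add: sum.reindex)
qed

definition net_mass :: "('n \<Rightarrow> ('n \<Rightarrow> 'v) \<Rightarrow> 'v \<Rightarrow> real) \<Rightarrow> ('n \<Rightarrow> 'v) \<Rightarrow> real" where
  "net_mass K \<omega> = (\<Prod>t\<in>G. K t (restrict \<omega> (par t)) (\<omega> t))"

lemma sum_desc_net_mass:
  fixes K :: "'n \<Rightarrow> ('n \<Rightarrow> 'v) \<Rightarrow> 'v \<Rightarrow> real"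
  assumes K_sum: "\<And>t xp. t \<in> G \<Longrightarrow> xp \<in> PiE (par t) X \<Longrightarrow> (\<Sum>a\<in>X t. K t xp a) = 1"
    and s: "s \<in> G" and x: "x \<in> PiE (nondesc G par s) X" and z: "z \<in> X s"
  shows "(\<Sum>zD\<in>PiE (desc G par s) X. net_mass K (combine G par s z zD x))
    = K s (restrict x (par s)) z * (\<Prod>t\<in>nondesc G par s. K t (restrict x (par t)) (x t))"
proof -
  let ?D = "desc G par s" and ?N = "nondesc G par s"
  have "PiE ?D X \<noteq> {}" using X_fin desc_subset by (auto simp: PiE_eq_empty_iff)
  then obtain zD0 where zD0: "zD0 \<in> PiE ?D X" by blast
  define \<omega> where "\<omega> = combine G par s z zD0 x"
  have "\<omega> \<in> Pi G X" using combine_in_space[OF s x z zD0] by (auto simp: \<omega>_def PiE_iff)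
  have override: "combine G par s z zD x = override_on \<omega> zD ?D" for zD
    by (auto simp: combine_def override_on_def \<omega>_def fun_eq_iff not_in_desc)
  have restrict_\<omega>: "restrict \<omega> (par t) = restrict x (par t)" if "t \<in> insert s ?N" for t
    using that par_nondesc[OF s] par_nondesc_closed[of t s]
    by (auto simp: restrict_def fun_eq_iff \<omega>_def combine_def nondesc_def)
  have "(\<Sum>zD\<in>PiE ?D X. net_mass K (combine G par s z zD x))
      = (\<Prod>t\<in>G - ?D. K t (restrict \<omega> (par t)) (\<omega> t))"
    unfolding net_mass_def override
    by (rule sum_kernel_prod_child_closed[OF K_sum desc_subset order_refl _ \<open>\<omega> \<in> Pi G X\<close>])
      (auto intro: desc_trans_edge)
  also have "G - ?D = insert s ?N" using s not_in_desc by (auto simp: nondesc_def)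
  also have "(\<Prod>t\<in>insert s ?N. K t (restrict \<omega> (par t)) (\<omega> t))
      = K s (restrict x (par s)) z * (\<Prod>t\<in>?N. K t (restrict x (par t)) (x t))"
    using finite_nodes restrict_\<omega>
    by (subst prod.insert) (auto simp: nondesc_def \<omega>_def combine_def intro!: prod.cong)
  finally show ?thesis .
qed

lemma sum_nondesc_event_net_mass:
  fixes K :: "'n \<Rightarrow> ('n \<Rightarrow> 'v) \<Rightarrow> 'v \<Rightarrow> real"
  assumes K_sum: "\<And>t xp. t \<in> G \<Longrightarrow> xp \<in> PiE (par t) X \<Longrightarrow> (\<Sum>a\<in>X t. K t xp a) = 1"
    and s: "s \<in> G" and x: "x \<in> PiE (nondesc G par s) X"
  shows "sum (net_mass K) (nondesc_event s x) = (\<Prod>t\<in>nondesc G par s. K t (restrict x (par t)) (x t))"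
  using K_sum[OF s restrict_par_PiE[OF s x]]
  by (simp add: sum_nondesc_event[OF s x] sum_desc_net_mass[OF K_sum s x] sum_distrib_right[symmetric])

lemma nondesc_event_nonempty: "s \<in> G \<Longrightarrow> x \<in> PiE (nondesc G par s) X \<Longrightarrow> nondesc_event s x \<noteq> {}"
  using X_fin desc_subset by (auto simp: nondesc_event_eq PiE_eq_empty_iff)

lemma event_subset: "event \<Omega> S x \<subseteq> \<Omega>"
  by (auto simp: event_def)

lemma sum_desc_point_mass:
  assumes P: "full_cond_prob \<Omega> P" and s: "s \<in> G" and x: "x \<in> PiE (nondesc G par s) X" and "z \<in> X s"
  shows "(\<Sum>zD\<in>PiE (desc G par s) X. P {combine G par s z zD x} \<Omega>)
    = P (node_event s z) (nondesc_event s x) * P (nondesc_event s x) \<Omega>"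
proof -
  have "node_event s z \<inter> nondesc_event s x \<subseteq> \<Omega>" by (auto simp: event_def)
  then have "(\<Sum>zD\<in>PiE (desc G par s) X. P {combine G par s z zD x} \<Omega>)
      = P (node_event s z \<inter> nondesc_event s x) \<Omega>"
    using full_cond_prob_sum_singletons[OF P finite_space space_nonempty]
      sum_node_nondesc_event[OF s x \<open>z \<in> X s\<close>, of "\<lambda>\<omega>. P {\<omega>} \<Omega>"] by simp
  also have "\<dots> = P (node_event s z) (nondesc_event s x) * P (nondesc_event s x) \<Omega>"
    using nondesc_event_nonempty[OF s x] event_subset
    by (subst full_cond_prob_mult[OF P]) (auto simp: Int_absorb2)
  finally show ?thesis .
qed

end

section \<open>Credal networks described by linear constraints\<close>

locale credal_net = dag_model G par X
  for G :: "'n set" and par :: "'n \<Rightarrow> 'n set" and X :: "'n \<Rightarrow> 'v set" +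
  fixes M :: "'n \<Rightarrow> ('n \<Rightarrow> 'v) \<Rightarrow> ('v \<Rightarrow> real) set"
    and \<Gamma> :: "'n \<Rightarrow> ('n \<Rightarrow> 'v) \<Rightarrow> ('v \<Rightarrow> real) set"
  assumes M_ok: "\<forall>s\<in>G. \<forall>xp\<in>PiE (par s) X. local_model_ok (X s) (M s xp)"
    and M_Gamma: "\<forall>s\<in>G. \<forall>xp\<in>PiE (par s) X.
       M s xp = {p \<in> extensional (X s). (\<Sum>z\<in>X s. p z) = 1 \<and>
                   (\<forall>\<gamma>\<in>\<Gamma> s xp. (\<Sum>z\<in>X s. p z * \<gamma> z) \<ge> 0)}"
begin

definition satisfies_Gamma :: "(('n \<Rightarrow> 'v) \<Rightarrow> real) \<Rightarrow> 'n \<Rightarrow> ('n \<Rightarrow> 'v) \<Rightarrow> bool" where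
  "satisfies_Gamma q s x \<longleftrightarrow> (\<forall>\<gamma>\<in>\<Gamma> s (restrict x (par s)).
     (\<Sum>z\<in>X s. \<Sum>zD\<in>PiE (desc G par s) X. q (combine G par s z zD x) * \<gamma> z) \<ge> 0)"

lemma in_M_iff:
  "s \<in> G \<Longrightarrow> xp \<in> PiE (par s) X \<Longrightarrow> q \<in> M s xp \<longleftrightarrow>
    q \<in> extensional (X s) \<and> (\<Sum>z\<in>X s. q z) = 1 \<and> (\<forall>\<gamma>\<in>\<Gamma> s xp. (\<Sum>z\<in>X s. q z * \<gamma> z) \<ge> 0)"
  using M_Gamma by blast

lemma F_irr_satisfies_Gamma:
  assumes "P \<in> F_irr G par X M" and s: "s \<in> G" and x: "x \<in> PiE (nondesc G par s) X"
  shows "satisfies_Gamma (\<lambda>\<omega>\<in>\<Omega>. P {\<omega>} \<Omega>) s x"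
  unfolding satisfies_Gamma_def
proof
  fix \<gamma> assume \<gamma>: "\<gamma> \<in> \<Gamma> s (restrict x (par s))"
  let ?B = "nondesc_event s x"
  have P: "full_cond_prob \<Omega> P" using assms(1) by (simp add: F_irr_def)
  have "(\<lambda>z\<in>X s. P (node_event s z) ?B) \<in> M s (restrict x (par s))"
    using assms by (simp add: F_irr_def)
  then have local: "(\<Sum>z\<in>X s. P (node_event s z) ?B * \<gamma> z) \<ge> 0"
    using \<gamma> in_M_iff[OF s restrict_par_PiE[OF s x]] by simp
  have "(\<Sum>z\<in>X s. \<Sum>zD\<in>PiE (desc G par s) X. (\<lambda>\<omega>\<in>\<Omega>. P {\<omega>} \<Omega>) (combine G par s z zD x) * \<gamma> z)
      = (\<Sum>z\<in>X s. (\<Sum>zD\<in>PiE (desc G par s) X. P {combine G par s z zD x} \<Omega>) * \<gamma> z)"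
    using combine_in_space[OF s x] by (simp add: sum_distrib_right)
  also have "\<dots> = P ?B \<Omega> * (\<Sum>z\<in>X s. P (node_event s z) ?B * \<gamma> z)"
    by (simp add: sum_desc_point_mass[OF P s x] sum_distrib_left mult_ac)
  finally show "(\<Sum>z\<in>X s. \<Sum>zD\<in>PiE (desc G par s) X. (\<lambda>\<omega>\<in>\<Omega>. P {\<omega>} \<Omega>) (combine G par s z zD x) * \<gamma> z) \<ge> 0"
    using local full_cond_prob_nonneg[OF P event_subset order_refl space_nonempty] by simp
qed

lemma lex_cond_in_F_irr:
  assumes "lex_system \<Omega> Ls"
    and first_layer: "\<And>s x. s \<in> G \<Longrightarrow> x \<in> PiE (nondesc G par s) X \<Longrightarrow>
      satisfies_Gamma (Ls ! first_pos_layer Ls (nondesc_event s x)) s x"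
  shows "lex_cond Ls \<in> F_irr G par X M"
  unfolding F_irr_def
proof (intro CollectI conjI ballI)
  interpret lex_system \<Omega> Ls by fact
  show "full_cond_prob \<Omega> (lex_cond Ls)" by (rule full_cond_prob_lex_cond)
  fix s x assume s: "s \<in> G" and x: "x \<in> PiE (nondesc G par s) X"
  let ?B = "nondesc_event s x"
  define L where "L = Ls ! first_pos_layer Ls ?B"
  define f where "f z = (\<Sum>zD\<in>PiE (desc G par s) X. L (combine G par s z zD x))" for z
  have "0 < sum L ?B"
    unfolding L_def using first_pos_layer_pos[OF event_subset nondesc_event_nonempty[OF s x]] .
  then have f_pos: "0 < (\<Sum>z\<in>X s. f z)"
    unfolding f_def sum_nondesc_event[OF s x] .
  have cond: "lex_cond Ls (node_event s z) ?B = f z / (\<Sum>z\<in>X s. f z)" if "z \<in> X s" for z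
    unfolding lex_cond_def L_def[symmetric] f_def sum_node_nondesc_event[OF s x that]
      sum_nondesc_event[OF s x] ..
  have f_Gamma: "(\<Sum>z\<in>X s. f z * \<gamma> z) \<ge> 0" if "\<gamma> \<in> \<Gamma> s (restrict x (par s))" for \<gamma>
    using first_layer[OF s x] that unfolding satisfies_Gamma_def L_def[symmetric] f_def
    by (simp add: sum_distrib_right)
  show "(\<lambda>z\<in>X s. lex_cond Ls (node_event s z) ?B) \<in> M s (restrict x (par s))"
    unfolding in_M_iff[OF s restrict_par_PiE[OF s x]]
  proof (intro conjI ballI)
    show "(\<Sum>z\<in>X s. (\<lambda>z\<in>X s. lex_cond Ls (node_event s z) ?B) z) = 1"
      using f_pos by (simp add: cond sum_divide_distrib[symmetric] cong: sum.cong)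
    fix \<gamma> assume "\<gamma> \<in> \<Gamma> s (restrict x (par s))"
    have "(\<Sum>z\<in>X s. (\<lambda>z\<in>X s. lex_cond Ls (node_event s z) ?B) z * \<gamma> z)
        = (\<Sum>z\<in>X s. f z * \<gamma> z) / (\<Sum>z\<in>X s. f z)"
      by (simp add: cond sum_divide_distrib cong: sum.cong)
    then show "(\<Sum>z\<in>X s. (\<lambda>z\<in>X s. lex_cond Ls (node_event s z) ?B) z * \<gamma> z) \<ge> 0"
      using f_Gamma[OF \<open>\<gamma> \<in> _\<close>] f_pos by simp
  qed simp
qed

lemma F_irr_global_satisfies_Gamma:
  "p \<in> F_irr_global G par X M \<Longrightarrow>
    is_pmf_on \<Omega> p \<and> (\<forall>s\<in>G. \<forall>x\<in>PiE (nondesc G par s) X. satisfies_Gamma p s x)"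
  using full_cond_prob_point_mass_pmf[OF _ finite_space space_nonempty] F_irr_satisfies_Gamma
  by (auto simp: F_irr_global_def F_irr_def)

definition chosen_local :: "'n \<Rightarrow> ('n \<Rightarrow> 'v) \<Rightarrow> 'v \<Rightarrow> real" where
  "chosen_local t xp = (SOME q. q \<in> M t xp)"

(* The uniform kernel is positive, so the layer of S = G charges every assignment. *)
definition layer_kernel :: "'n set \<Rightarrow> 'n \<Rightarrow> ('n \<Rightarrow> 'v) \<Rightarrow> 'v \<Rightarrow> real" where
  "layer_kernel S t xp a = (if t \<in> S then 1 / real (card (X t)) else chosen_local t xp a)"

definition layers :: "(('n \<Rightarrow> 'v) \<Rightarrow> real) \<Rightarrow> 'n set list \<Rightarrow> (('n \<Rightarrow> 'v) \<Rightarrow> real) list" where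
  "layers p Ss = p # map (\<lambda>S. net_mass (layer_kernel S)) Ss"

lemma chosen_local_in_M: "t \<in> G \<Longrightarrow> xp \<in> PiE (par t) X \<Longrightarrow> chosen_local t xp \<in> M t xp"
  using M_ok unfolding chosen_local_def local_model_ok_def by (simp add: some_in_eq)

lemma chosen_local_pmf: "t \<in> G \<Longrightarrow> xp \<in> PiE (par t) X \<Longrightarrow> is_pmf_on (X t) (chosen_local t xp)"
  using M_ok chosen_local_in_M unfolding local_model_ok_def by blast

lemma layer_kernel_sum: "t \<in> G \<Longrightarrow> xp \<in> PiE (par t) X \<Longrightarrow> (\<Sum>a\<in>X t. layer_kernel S t xp a) = 1"
  using X_fin chosen_local_pmf[of t xp] by (cases "t \<in> S") (auto simp: layer_kernel_def is_pmf_on_def)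

lemma layer_kernel_nonneg:
  "t \<in> G \<Longrightarrow> xp \<in> PiE (par t) X \<Longrightarrow> a \<in> X t \<Longrightarrow> 0 \<le> layer_kernel S t xp a"
  using chosen_local_pmf[of t xp] by (simp add: layer_kernel_def is_pmf_on_def)

lemma net_mass_layer_nonneg: "\<omega> \<in> \<Omega> \<Longrightarrow> 0 \<le> net_mass (layer_kernel S) \<omega>"
  unfolding net_mass_def using par_subset
  by (intro prod_nonneg layer_kernel_nonneg) (auto simp: PiE_iff)

lemma net_mass_uniform_pos: "\<omega> \<in> \<Omega> \<Longrightarrow> 0 < net_mass (layer_kernel G) \<omega>"
  unfolding net_mass_def layer_kernel_def using X_fin by (intro prod_pos) (simp add: card_gt_0_iff)

lemma satisfies_Gamma_net_mass:
  assumes "s \<notin> S" and s: "s \<in> G" and x: "x \<in> PiE (nondesc G par s) X"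
  shows "satisfies_Gamma (net_mass (layer_kernel S)) s x"
  unfolding satisfies_Gamma_def
proof
  let ?xp = "restrict x (par s)"
  let ?c = "\<Prod>t\<in>nondesc G par s. layer_kernel S t (restrict x (par t)) (x t)"
  fix \<gamma> assume "\<gamma> \<in> \<Gamma> s ?xp"
  have "(\<Sum>z\<in>X s. \<Sum>zD\<in>PiE (desc G par s) X. net_mass (layer_kernel S) (combine G par s z zD x) * \<gamma> z)
      = (\<Sum>z\<in>X s. (\<Sum>zD\<in>PiE (desc G par s) X. net_mass (layer_kernel S) (combine G par s z zD x)) * \<gamma> z)"
    by (simp add: sum_distrib_right)
  also have "\<dots> = (\<Sum>z\<in>X s. ?c * (chosen_local s ?xp z * \<gamma> z))"
    using sum_desc_net_mass[where K = "layer_kernel S", OF layer_kernel_sum s x] \<open>s \<notin> S\<close>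
    by (intro sum.cong) (simp_all add: layer_kernel_def)
  also have "\<dots> = ?c * (\<Sum>z\<in>X s. chosen_local s ?xp z * \<gamma> z)"
    by (rule sum_distrib_left[symmetric])
  finally have eq: "(\<Sum>z\<in>X s. \<Sum>zD\<in>PiE (desc G par s) X. net_mass (layer_kernel S) (combine G par s z zD x) * \<gamma> z)
      = ?c * (\<Sum>z\<in>X s. chosen_local s ?xp z * \<gamma> z)" .
  have "(\<Sum>z\<in>X s. chosen_local s ?xp z * \<gamma> z) \<ge> 0"
    using \<open>\<gamma> \<in> \<Gamma> s ?xp\<close> chosen_local_in_M[OF s restrict_par_PiE[OF s x]]
      in_M_iff[OF s restrict_par_PiE[OF s x]] by blast
  moreover have "?c \<ge> 0"
    using x par_nondesc_closed by (intro prod_nonneg layer_kernel_nonneg) (auto simp: nondesc_def PiE_iff)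
  ultimately show "(\<Sum>z\<in>X s. \<Sum>zD\<in>PiE (desc G par s) X. net_mass (layer_kernel S) (combine G par s z zD x) * \<gamma> z) \<ge> 0"
    unfolding eq by simp
qed

lemma sum_nondesc_event_layer_remove:
  assumes s: "s \<in> G" and x: "x \<in> PiE (nondesc G par s) X"
  shows "sum (net_mass (layer_kernel (S - {s}))) (nondesc_event s x) = sum (net_mass (layer_kernel S)) (nondesc_event s x)"
proof -
  have "sum (net_mass (layer_kernel S)) (nondesc_event s x)
      = (\<Prod>t\<in>nondesc G par s. layer_kernel S t (restrict x (par t)) (x t))"
    by (rule sum_nondesc_event_net_mass[OF layer_kernel_sum s x])
  moreover have "sum (net_mass (layer_kernel (S - {s}))) (nondesc_event s x)
      = (\<Prod>t\<in>nondesc G par s. layer_kernel (S - {s}) t (restrict x (par t)) (x t))"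
    by (rule sum_nondesc_event_net_mass[OF layer_kernel_sum s x])
  ultimately show ?thesis
    by (auto simp: layer_kernel_def nondesc_def intro!: prod.cong)
qed

lemma lex_system_layers:
  assumes "is_pmf_on \<Omega> p" "G \<in> set Ss"
  shows "lex_system \<Omega> (layers p Ss)"
proof
  fix k \<omega> assume "k < length (layers p Ss)" "\<omega> \<in> \<Omega>"
  then show "0 \<le> (layers p Ss ! k) \<omega>"
    using assms(1) net_mass_layer_nonneg by (cases k) (auto simp: layers_def is_pmf_on_def)
next
  fix \<omega> assume "\<omega> \<in> \<Omega>"
  obtain j where "j < length Ss" "Ss ! j = G" using assms(2) by (meson in_set_conv_nth)
  then show "\<exists>k<length (layers p Ss). 0 < (layers p Ss ! k) \<omega>"
    using net_mass_uniform_pos[OF \<open>\<omega> \<in> \<Omega>\<close>] by (intro exI[of _ "Suc j"]) (simp add: layers_def)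
qed (rule finite_space)

lemma first_layer_satisfies_Gamma:
  assumes p: "is_pmf_on \<Omega> p" and p_Gamma: "satisfies_Gamma p s x"
    and Ss: "set Ss = Pow G" "sorted (map card Ss)"
    and s: "s \<in> G" and x: "x \<in> PiE (nondesc G par s) X"
  shows "satisfies_Gamma (layers p Ss ! first_pos_layer (layers p Ss) (nondesc_event s x)) s x"
proof -
  let ?Ls = "layers p Ss" and ?B = "nondesc_event s x"
  interpret lex_system \<Omega> ?Ls
    using lex_system_layers[OF p] Ss(1) by simp
  have B: "?B \<subseteq> \<Omega>" "?B \<noteq> {}" using event_subset nondesc_event_nonempty[OF s x] by auto
  show ?thesis
  proof (cases "first_pos_layer ?Ls ?B")
    case 0
    then show ?thesis using p_Gamma by (simp add: layers_def)
  next
    case (Suc j)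
    then have j: "j < length Ss" using first_pos_layer_less[OF B] by (simp add: layers_def)
    define S where "S = Ss ! j"
    have layer: "?Ls ! first_pos_layer ?Ls ?B = net_mass (layer_kernel S)"
      using Suc j by (simp add: layers_def S_def)
    have "s \<notin> S"
    proof
      assume "s \<in> S"
      have "S \<subseteq> G" using Ss(1) j by (metis PowD S_def nth_mem)
      then have "S - {s} \<in> set Ss" using Ss(1) by auto
      then obtain i where i: "i < length Ss" "Ss ! i = S - {s}" by (meson in_set_conv_nth)
      have "card (S - {s}) < card S"
        using \<open>s \<in> S\<close> \<open>S \<subseteq> G\<close> finite_nodes by (meson card_Diff1_less finite_subset)
      then have "Suc i < first_pos_layer ?Ls ?B"
        using sorted_card_nth_less[OF Ss(2) i(1) j] i(2) Suc by (simp add: S_def)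
      then have "sum (net_mass (layer_kernel (S - {s}))) ?B = 0"
        using less_first_pos_layer[OF B, of "Suc i"] i by (simp add: layers_def)
      moreover have "0 < sum (net_mass (layer_kernel S)) ?B"
        using first_pos_layer_pos[OF B] layer by simp
      ultimately show False
        using sum_nondesc_event_layer_remove[OF s x, of S] by simp
    qed
    then show ?thesis unfolding layer by (rule satisfies_Gamma_net_mass[OF _ s x])
  qed
qed

lemma lex_cond_layers_singleton:
  assumes p: "is_pmf_on \<Omega> p" and "G \<in> set Ss" and "\<omega> \<in> \<Omega>"
  shows "lex_cond (layers p Ss) {\<omega>} \<Omega> = p \<omega>"
proof -
  interpret lex_system \<Omega> "layers p Ss"
    by (rule lex_system_layers[OF assms(1,2)])
  have "sum p \<Omega> = 1" using p by (simp add: is_pmf_on_def)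
  then have "first_pos_layer (layers p Ss) \<Omega> = 0"
    using space_nonempty by (intro first_pos_layer_eqI) (auto simp: layers_def)
  then show ?thesis
    using \<open>sum p \<Omega> = 1\<close> \<open>\<omega> \<in> \<Omega>\<close> by (simp add: lex_cond_def layers_def)
qed

lemma satisfies_Gamma_in_F_irr_global:
  assumes p: "is_pmf_on \<Omega> p" and p_Gamma: "\<forall>s\<in>G. \<forall>x\<in>PiE (nondesc G par s) X. satisfies_Gamma p s x"
  shows "p \<in> F_irr_global G par X M"
proof -
  obtain xs where "set xs = Pow G" using finite_list[of "Pow G"] finite_nodes by auto
  define Ss where "Ss = sort_key card xs"
  have Ss: "set Ss = Pow G" "sorted (map card Ss)"
    using \<open>set xs = Pow G\<close> by (simp_all add: Ss_def)
  have "lex_cond (layers p Ss) \<in> F_irr G par X M"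
    using lex_system_layers[OF p] first_layer_satisfies_Gamma[OF p _ Ss] p_Gamma Ss(1)
    by (intro lex_cond_in_F_irr) auto
  moreover have "p = (\<lambda>\<omega>\<in>\<Omega>. lex_cond (layers p Ss) {\<omega>} \<Omega>)"
    using lex_cond_layers_singleton[OF p] p Ss(1)
    by (auto simp: is_pmf_on_def extensional_def fun_eq_iff)
  ultimately show ?thesis unfolding F_irr_global_def by blast
qed

lemma F_irr_global_eq:
  "F_irr_global G par X M =
    {p. is_pmf_on \<Omega> p \<and> (\<forall>s\<in>G. \<forall>x\<in>PiE (nondesc G par s) X. satisfies_Gamma p s x)}"
proof (intro set_eqI iffI)
  fix p assume "p \<in> F_irr_global G par X M"
  then show "p \<in> {p. is_pmf_on \<Omega> p \<and> (\<forall>s\<in>G. \<forall>x\<in>PiE (nondesc G par s) X. satisfies_Gamma p s x)}"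
    using F_irr_global_satisfies_Gamma by simp
qed (use satisfies_Gamma_in_F_irr_global in simp)

end

theorem proposition1:
  fixes G :: "'n set" and par :: "'n \<Rightarrow> 'n set" and X :: "'n \<Rightarrow> 'v set"
    and M :: "'n \<Rightarrow> ('n \<Rightarrow> 'v) \<Rightarrow> ('v \<Rightarrow> real) set"
    and \<Gamma> :: "'n \<Rightarrow> ('n \<Rightarrow> 'v) \<Rightarrow> ('v \<Rightarrow> real) set"
  assumes dag: "is_dag G par"
    and X_fin: "\<forall>s\<in>G. finite (X s) \<and> X s \<noteq> {}"
    and M_ok: "\<forall>s\<in>G. \<forall>xp\<in>PiE (par s) X. local_model_ok (X s) (M s xp)"
    and M_Gamma: "\<forall>s\<in>G. \<forall>xp\<in>PiE (par s) X.
       M s xp = {p \<in> extensional (X s). (\<Sum>z\<in>X s. p z) = 1 \<and>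
                   (\<forall>\<gamma>\<in>\<Gamma> s xp. (\<Sum>z\<in>X s. p z * \<gamma> z) \<ge> 0)}"
  shows "F_irr_global G par X M =
     {p. is_pmf_on (PiE G X) p \<and>
         (\<forall>s\<in>G. \<forall>x\<in>PiE (nondesc G par s) X. \<forall>\<gamma>\<in>\<Gamma> s (restrict x (par s)).
            (\<Sum>z\<in>X s. \<Sum>zD\<in>PiE (desc G par s) X. p (combine G par s z zD x) * \<gamma> z) \<ge> 0)}"
proof -
  interpret credal_net G par X M \<Gamma>
    using assms by unfold_locales
  show ?thesis
    using F_irr_global_eq unfolding satisfies_Gamma_def .
qed

end
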